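(* Let $f:\mathbb{R}^n\to\mathbb{R}$ be differentiable, $L$-smooth and $m$-strongly convex with $m>0$, and let $x_*$ be the unique point with $\nabla f(x_* )=0$. Let $0<\mu<2$, $\delta>0$, $\alpha>0$, $\eta>0$ and constants $0<c_1\le c_2<+\infty$. Consider the adaptive fractional order accelerated gradient descent (AFOAGD) iteration $$x_{k+1}=y_k-\alpha\,\nabla f(y_k)\,\beta_k\,(\|y_k-y_{k-1}\|_2+\delta)^{1-\mu},\qquad y_k=x_k+\eta(x_k-x_{k-1}),$$ where the scalars $\beta_k>0$ satisfy $0<c_1\le \beta_k(\|y_k-y_{k-1}\|_2+\delta)^{1-\mu}\le c_2<+\infty$ for all $k$. Set $u_k=\nabla f(y_k)\,\beta_k(\|y_k-y_{k-1}\|_2+\delta)^{1-\mu}$, $u_*=0$, and $$e_k=\big[(x_{k-1}-x_* )^\top,\ (x_k-x_* )^\top,\ (u_k-u_* )^\top\big]^\top\in\mathbb{R}^{3n}.$$ Then for all trajectories and all $k$, $$f(x_{k+1})-f(x_* )\le e_k^\top N^1 e_k,$$ where $$N^1=\begin{bmatrix}-\frac{\eta^2 m}{2}I_n & \frac{\eta(\eta+1)m}{2}I_n & -\frac{\eta}{2c_1}I_n\\ \frac{\eta(\eta+1)m}{2}I_n & -\frac{(\eta+1)^2 m}{2}I_n & \frac{\eta+1}{2c_1}I_n\\ -\frac{\eta}{2c_1}I_n & \frac{\eta+1}{2c_1}I_n & \left(\frac12\alpha^2L-\frac{\alpha}{c_2}\right)I_n\end{bmatrix}.$$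
   Context: A differentiable $f$ is $L$-smooth if $\|\nabla f(x)-\nabla f(y)\|_2\le L\|x-y\|_2$ for all $x,y$, and $m$-strongly convex if $m\|x-y\|_2^2\le (x-y)^\top(\nabla f(x)-\nabla f(y))$ for all $x,y$. $I_n$ is the $n\times n$ identity matrix. *)

theory Defs
  imports "HOL-Analysis.Analysis"
begin

definition L_smooth :: "real \<Rightarrow> ('a::real_inner \<Rightarrow> 'a) \<Rightarrow> bool" where
  "L_smooth L g \<longleftrightarrow> (\<forall>x y. norm (g x - g y) \<le> L * norm (x - y))"

definition strongly_convex_grad :: "real \<Rightarrow> ('a::real_inner \<Rightarrow> 'a) \<Rightarrow> bool" where
  "strongly_convex_grad m g \<longleftrightarrow> (\<forall>x y. m * (norm (x - y))\<^sup>2 \<le> inner (x - y) (g x - g y))"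

text \<open>Quadratic form e^T (N \<otimes> I_n) e of a 3x3 block matrix whose blocks are scalar
  multiples N i j of the identity I_n, evaluated at the stacked vector
  e = [e 0; e 1; e 2] in R^(3n).\<close>

definition block_quad3 :: "(nat \<Rightarrow> nat \<Rightarrow> real) \<Rightarrow> (nat \<Rightarrow> 'a::real_inner) \<Rightarrow> real" where
  "block_quad3 N e = (\<Sum>i<3. \<Sum>j<3. N i j * inner (e i) (e j))"

definition N1 :: "real \<Rightarrow> real \<Rightarrow> real \<Rightarrow> real \<Rightarrow> real \<Rightarrow> real \<Rightarrow> nat \<Rightarrow> nat \<Rightarrow> real" where
  "N1 \<eta> m L \<alpha> c1 c2 i j =
     [[- (\<eta>^2 * m / 2),        \<eta> * (\<eta> + 1) * m / 2,     - (\<eta> / (2 * c1))],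
      [\<eta> * (\<eta> + 1) * m / 2,    - ((\<eta> + 1)^2 * m / 2), (\<eta> + 1) / (2 * c1)],
      [- (\<eta> / (2 * c1)),       (\<eta> + 1) / (2 * c1),     \<alpha>^2 * L / 2 - \<alpha> / c2]] ! i ! j"

end

theory Submission
  imports Defs
begin

text \<open>Descent lemma plus strong convexity between y_k and x_* give
  f(x_{k+1}) - f(x_*) \<le> <g(y_k), y_k - x_*> - m/2 |y_k - x_*|^2 - \<alpha> s |g(y_k)|^2 + L \<alpha>^2 s^2/2 |g(y_k)|^2,
  where s \<in> [c1, c2] is the adaptive scale. Since g(x_*) = 0, monotonicity makes
  <g(y_k), y_k - x_*> nonnegative, so it may be enlarged by the factor s/c1 \<ge> 1, and
  \<alpha> s |g(y_k)|^2 \<ge> \<alpha> s^2/c2 |g(y_k)|^2. Writing u_k = s g(y_k) and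
  y_k - x_* = (1+\<eta>)(x_k - x_*) - \<eta>(x_{k-1} - x_*), the resulting bound is exactly e_k^T N^1 e_k.\<close>

lemma has_real_derivative_along_line:
  fixes f :: "'a::real_inner \<Rightarrow> real"
  assumes "\<And>z. GDERIV f z :> g z"
  shows "((\<lambda>t. f (y + t *\<^sub>R d)) has_real_derivative inner (g (y + t *\<^sub>R d)) d) (at t)"
proof -
  have line: "((\<lambda>t. y + t *\<^sub>R d) has_derivative (\<lambda>h. h *\<^sub>R d)) (at t)"
    by (auto intro!: derivative_eq_intros)
  have "((\<lambda>t. f (y + t *\<^sub>R d)) has_derivative (\<lambda>h. inner (h *\<^sub>R d) (g (y + t *\<^sub>R d)))) (at t)"
    using diff_chain_at[OF line assms[of "y + t *\<^sub>R d", unfolded gderiv_def]] by (simp add: o_def)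
  moreover have "(\<lambda>h. inner (h *\<^sub>R d) (g (y + t *\<^sub>R d))) = (*) (inner (g (y + t *\<^sub>R d)) d)"
    by (auto simp: fun_eq_iff inner_commute)
  ultimately show ?thesis unfolding has_field_derivative_def by simp
qed

lemma L_smooth_descent:
  fixes f :: "'a::real_inner \<Rightarrow> real"
  assumes grad: "\<And>z. GDERIV f z :> g z" and smooth: "L_smooth L g"
  shows "f (y + d) \<le> f y + inner (g y) d + L / 2 * (norm d)\<^sup>2"
proof -
  define \<phi> where "\<phi> t = f (y + t *\<^sub>R d) - t * inner (g y) d - L / 2 * t\<^sup>2 * (norm d)\<^sup>2" for t
  have "\<phi> 1 \<le> \<phi> 0"
  proof (rule DERIV_nonpos_imp_nonincreasing[of 0 1])
    fix t :: real assume t: "0 \<le> t" "t \<le> 1"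
    have deriv: "(\<phi> has_real_derivative
        inner (g (y + t *\<^sub>R d) - g y) d - L * t * (norm d)\<^sup>2) (at t)"
      unfolding \<phi>_def inner_diff_left
      by (rule derivative_eq_intros has_real_derivative_along_line[OF grad] | simp)+
    have "inner (g (y + t *\<^sub>R d) - g y) d \<le> norm (g (y + t *\<^sub>R d) - g y) * norm d"
      by (rule norm_cauchy_schwarz)
    also have "\<dots> \<le> L * norm (t *\<^sub>R d) * norm d"
      using smooth unfolding L_smooth_def by (intro mult_right_mono) (metis add_diff_cancel_left', simp)
    also have "\<dots> = L * t * (norm d)\<^sup>2"
      using t by (simp add: power2_eq_square)
    finally show "\<exists>D. (\<phi> has_real_derivative D) (at t) \<and> D \<le> 0"
      using deriv by force
  qed simp
  then show ?thesis unfolding \<phi>_def by simp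
qed

lemma strongly_convex_grad_lower_bound:
  fixes f :: "'a::real_inner \<Rightarrow> real"
  assumes grad: "\<And>z. GDERIV f z :> g z" and sconv: "strongly_convex_grad m g"
  shows "f y + inner (g y) d + m / 2 * (norm d)\<^sup>2 \<le> f (y + d)"
proof -
  define \<phi> where "\<phi> t = f (y + t *\<^sub>R d) - t * inner (g y) d - m / 2 * t\<^sup>2 * (norm d)\<^sup>2" for t
  have "\<phi> 0 \<le> \<phi> 1"
  proof (rule DERIV_nonneg_imp_nondecreasing[of 0 1])
    fix t :: real assume t: "0 \<le> t" "t \<le> 1"
    define D where "D = inner (g (y + t *\<^sub>R d) - g y) d - m * t * (norm d)\<^sup>2"
    have deriv: "(\<phi> has_real_derivative D) (at t)"
      unfolding \<phi>_def D_def inner_diff_left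
      by (rule derivative_eq_intros has_real_derivative_along_line[OF grad] | simp)+
    have "m * (norm (t *\<^sub>R d))\<^sup>2 \<le> inner (t *\<^sub>R d) (g (y + t *\<^sub>R d) - g y)"
      using sconv unfolding strongly_convex_grad_def by (metis add_diff_cancel_left')
    then have "0 \<le> t * D"
      by (simp add: D_def power2_eq_square inner_commute algebra_simps)
    moreover have "t = 0 \<Longrightarrow> D = 0"
      by (simp add: D_def)
    ultimately have "0 \<le> D"
      using t by (cases "t = 0") (auto simp: zero_le_mult_iff)
    then show "\<exists>D. (\<phi> has_real_derivative D) (at t) \<and> 0 \<le> D"
      using deriv by blast
  qed simp
  then show ?thesis unfolding \<phi>_def by simp
qed

lemma strongly_convex_grad_inner_nonneg:
  assumes "strongly_convex_grad m g" "0 \<le> m" "g xs = 0"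
  shows "0 \<le> inner (g z) (z - xs)"
proof -
  have "m * (norm (z - xs))\<^sup>2 \<le> inner (z - xs) (g z)"
    using assms(1,3) unfolding strongly_convex_grad_def by (metis diff_zero)
  moreover have "0 \<le> m * (norm (z - xs))\<^sup>2"
    using assms(2) by simp
  ultimately show ?thesis by (simp add: inner_commute)
qed

lemma scaled_gradient_step_bound:
  fixes f :: "'a::real_inner \<Rightarrow> real"
  assumes grad: "\<And>z. GDERIV f z :> g z"
    and smooth: "L_smooth L g" and sconv: "strongly_convex_grad m g"
    and m: "0 \<le> m" and opt: "g xs = 0"
    and \<alpha>: "0 < \<alpha>" and c1: "0 < c1" "c1 \<le> s" and c2: "s \<le> c2"
  shows "f (y - (\<alpha> * s) *\<^sub>R g y) - f xs \<le>
    - m / 2 * (norm (y - xs))\<^sup>2 + inner (s *\<^sub>R g y) (y - xs) / c1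
      + (\<alpha>\<^sup>2 * L / 2 - \<alpha> / c2) * (norm (s *\<^sub>R g y))\<^sup>2"
proof -
  define G where "G = g y"
  define w where "w = y - xs"
  have descent: "f (y - (\<alpha> * s) *\<^sub>R G) \<le> f y - \<alpha> * s * (norm G)\<^sup>2 + L / 2 * (\<alpha> * s)\<^sup>2 * (norm G)\<^sup>2"
    using L_smooth_descent[OF grad smooth, of y "- (\<alpha> * s) *\<^sub>R G"]
    by (simp add: G_def power_mult_distrib flip: power2_norm_eq_inner)
  have lower: "f y - inner G w + m / 2 * (norm w)\<^sup>2 \<le> f xs"
    using strongly_convex_grad_lower_bound[OF grad sconv, of y "xs - y"]
    by (simp add: G_def w_def inner_diff_right norm_minus_commute)
  have "1 \<le> s / c1" "s / c2 \<le> 1"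
    using c1 c2 by simp_all
  have scale_c1: "inner G w \<le> s / c1 * inner G w"
    using mult_right_mono[OF \<open>1 \<le> s / c1\<close>] strongly_convex_grad_inner_nonneg[OF sconv m opt, of y]
    unfolding G_def w_def by fastforce
  have scale_c2: "\<alpha> * s * (s / c2) * (norm G)\<^sup>2 \<le> \<alpha> * s * 1 * (norm G)\<^sup>2"
    using \<open>s / c2 \<le> 1\<close> \<alpha> c1 by (intro mult_right_mono mult_left_mono) auto
  show ?thesis
    using descent lower scale_c1 scale_c2 unfolding G_def[symmetric] w_def[symmetric]
    by (simp add: power_mult_distrib power2_eq_square algebra_simps)
qed

lemma block_quad3_N1:
  fixes a b u :: "'a::real_inner"
  shows "block_quad3 (N1 \<eta> m L \<alpha> c1 c2) (\<lambda>i. [a, b, u] ! i) =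
    - m / 2 * (norm ((1 + \<eta>) *\<^sub>R b - \<eta> *\<^sub>R a))\<^sup>2 + inner u ((1 + \<eta>) *\<^sub>R b - \<eta> *\<^sub>R a) / c1
      + (\<alpha>\<^sup>2 * L / 2 - \<alpha> / c2) * (norm u)\<^sup>2"
  unfolding block_quad3_def N1_def power2_norm_eq_inner
  by (simp add: numeral_3_eq_3 lessThan_Suc inner_commute[of b a] inner_commute[of u a]
      inner_commute[of u b] power2_eq_square add_divide_distrib diff_divide_distrib algebra_simps)

theorem lemma1:
  fixes f :: "real^'n \<Rightarrow> real" and g :: "real^'n \<Rightarrow> real^'n"
    and L m \<mu> \<delta> \<alpha> \<eta> c1 c2 :: real and xs :: "real^'n"
    and x y :: "nat \<Rightarrow> real^'n" and \<beta> :: "nat \<Rightarrow> real"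
  assumes grad: "\<And>z. GDERIV f z :> g z"
    and smooth: "L_smooth L g"
    and sconv: "strongly_convex_grad m g"
    and m_pos: "m > 0"
    and opt: "g xs = 0"
    and mu: "0 < \<mu>" "\<mu> < 2"
    and pars: "\<delta> > 0" "\<alpha> > 0" "\<eta> > 0"
    and cs: "0 < c1" "c1 \<le> c2"
    and y_def: "\<And>k. k \<ge> 1 \<Longrightarrow> y k = x k + \<eta> *\<^sub>R (x k - x (k - 1))"
    and step: "\<And>k. k \<ge> 1 \<Longrightarrow>
       x (k + 1) = y k - (\<alpha> * \<beta> k * (norm (y k - y (k - 1)) + \<delta>) powr (1 - \<mu>)) *\<^sub>R g (y k)"
    and beta_pos: "\<And>k. k \<ge> 1 \<Longrightarrow> \<beta> k > 0"
    and beta_bnd: "\<And>k. k \<ge> 1 \<Longrightarrow>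
       c1 \<le> \<beta> k * (norm (y k - y (k - 1)) + \<delta>) powr (1 - \<mu>) \<and>
       \<beta> k * (norm (y k - y (k - 1)) + \<delta>) powr (1 - \<mu>) \<le> c2"
  shows "\<forall>k\<ge>1. f (x (k + 1)) - f xs \<le>
     block_quad3 (N1 \<eta> m L \<alpha> c1 c2)
       (\<lambda>i. [x (k - 1) - xs, x k - xs,
              (\<beta> k * (norm (y k - y (k - 1)) + \<delta>) powr (1 - \<mu>)) *\<^sub>R g (y k) - 0] ! i)"
proof (intro allI impI)
  fix k :: nat assume k: "k \<ge> 1"
  define s where "s = \<beta> k * (norm (y k - y (k - 1)) + \<delta>) powr (1 - \<mu>)"
  have x_next: "x (k + 1) = y k - (\<alpha> * s) *\<^sub>R g (y k)"
    unfolding step[OF k] s_def by (simp add: mult.assoc)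
  have y_shift: "y k - xs = (1 + \<eta>) *\<^sub>R (x k - xs) - \<eta> *\<^sub>R (x (k - 1) - xs)"
    unfolding y_def[OF k] by (simp add: algebra_simps)
  have "c1 \<le> s" "s \<le> c2"
    using beta_bnd[OF k] unfolding s_def by auto
  from scaled_gradient_step_bound[OF grad smooth sconv _ opt pars(2) cs(1) this] m_pos
  show "f (x (k + 1)) - f xs \<le> block_quad3 (N1 \<eta> m L \<alpha> c1 c2)
      (\<lambda>i. [x (k - 1) - xs, x k - xs,
             (\<beta> k * (norm (y k - y (k - 1)) + \<delta>) powr (1 - \<mu>)) *\<^sub>R g (y k) - 0] ! i)"
    unfolding s_def[symmetric] x_next block_quad3_N1 y_shift[symmetric] by simp
qed

end
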